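(* Let $n\ge 1$, $P\ge 0$ and $\mathbf{h}\in\mathbb{R}^n$, and let $$\mathbf{G}=(1+P\|\mathbf{h}\|^2)\mathbf{I}-P\mathbf{h}\mathbf{h}^T .$$ Let $\mathbf{a}^*$ be any minimizer of $f(\mathbf{a})=\mathbf{a}^T\mathbf{G}\mathbf{a}$ over $\mathbf{a}\in\mathbb{Z}^n\setminus\{\mathbf{0}\}$. Then either $\mathbf{a}^*=\pm\mathbf{u}_i$ for some $i$, or there exists $x\in\mathbb{R}$ such that, elementwise, $$\mathbf{a}^*-\tfrac12\mathbf{1}<\mathbf{h}x<\mathbf{a}^*+\tfrac12\mathbf{1},$$ and consequently $\mathbf{a}^*=\lfloor \mathbf{h}x\rceil$ (componentwise rounding to the nearest integer).
   Context: $\|\cdot\|$ is the Euclidean norm, $\mathbf{I}$ the $n\times n$ identity, $\mathbf{1}$ the all-ones vector, $\mathbf{u}_i$ the $i$-th standard unit vector of $\mathbb{R}^n$. Vector inequalities are elementwise. The matrix $\mathbf{G}$ is positive definite (its eigenvalues are $1$ and $1+P\|\mathbf{h}\|^2$), so a minimizer exists. *)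

theory Defs
  imports "HOL-Analysis.Analysis"
begin

definition int_vec :: "real^'n \<Rightarrow> bool" where
  "int_vec a \<longleftrightarrow> (\<forall>i. a $ i \<in> \<int>)"

definition outer :: "real^'n \<Rightarrow> real^'n \<Rightarrow> real^'n^'n" where
  "outer u v = (\<chi> i j. u $ i * v $ j)"

definition Gmat :: "real \<Rightarrow> real^'n \<Rightarrow> real^'n^'n" where
  "Gmat P h = (1 + P * (norm h)\<^sup>2) *\<^sub>R mat 1 - P *\<^sub>R outer h h"

definition fq :: "real \<Rightarrow> real^'n \<Rightarrow> real^'n \<Rightarrow> real" where
  "fq P h a = a \<bullet> (Gmat P h *v a)"

definition round_vec :: "real^'n \<Rightarrow> real^'n" where
  "round_vec v = (\<chi> i. real_of_int (round (v $ i)))"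

end

theory Submission
  imports Defs
begin

(* With c = 1 + P |h|^2 the form is f(a) = c |a|^2 - P (h.a)^2.
   Put x = P (h.a) / c.  Moving coordinate i of a by -s (s = +1 or -1) changes f by
     f(a - s u_i) - f(a) = c (1 - 2 s (a_i - h_i x)) - P h_i^2 .
   If a is not +u_i or -u_i, both neighbours a - u_i and a + u_i are nonzero integer
   vectors, so for a minimizer the change is nonnegative.  Choosing s to be the sign of
   a_i - h_i x shows that |a_i - h_i x| >= 1/2 forces |a_i - h_i x| = 1/2 and h_i x = 0,
   i.e. |a_i| = 1/2, which is impossible for an integer.  Hence |a_i - h_i x| < 1/2 for
   every i, and an integer vector that close to x h is its componentwise rounding. *)

lemma outer_mult_vec: "outer u v *v a = (v \<bullet> a) *\<^sub>R u"
  by (simp add: vec_eq_iff outer_def matrix_vector_mult_def inner_vec_def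
      sum_distrib_left sum_distrib_right mult.commute mult.left_commute)

lemma scaleR_matrix_vector_mult: "(k *\<^sub>R M) *v (a::real^'n) = k *\<^sub>R (M *v a)"
  by (simp add: vec_eq_iff matrix_vector_mult_def sum_distrib_left mult.assoc)

lemma fq_expand: "fq P h a = (1 + P * (norm h)\<^sup>2) * (a \<bullet> a) - P * (h \<bullet> a)\<^sup>2"
  unfolding fq_def Gmat_def
  by (simp add: matrix_vector_mult_diff_rdistrib scaleR_matrix_vector_mult outer_mult_vec
      inner_diff_right inner_commute power2_eq_square)

text \<open>The real parameter x = P (h.a) / (1 + P |h|^2) of the point x h on the line
  through h that the theorem compares a with.\<close>
definition line_param :: "real \<Rightarrow> real^'n \<Rightarrow> real^'n \<Rightarrow> real" where
  "line_param P h a = P * (h \<bullet> a) / (1 + P * (norm h)\<^sup>2)"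

lemma fq_coordinate_step:
  fixes P :: real and h a :: "real^'n"
  assumes s2: "s * s = 1" and P: "P \<ge> 0"
  shows "fq P h (a - s *\<^sub>R axis i 1) - fq P h a
     = (1 + P * (norm h)\<^sup>2) * (1 - 2 * s * (a $ i - h $ i * line_param P h a))
       - P * (h $ i)\<^sup>2"
proof -
  have c: "1 + P * (norm h)\<^sup>2 > 0" using P by (simp add: add_pos_nonneg)
  have e1: "(a - s *\<^sub>R axis i 1) \<bullet> (a - s *\<^sub>R axis i 1) = a \<bullet> a - 2 * s * a $ i + 1"
    using s2 by (simp add: inner_diff_left inner_diff_right inner_axis inner_axis'
        inner_commute algebra_simps)
  have e2: "h \<bullet> (a - s *\<^sub>R axis i 1) = h \<bullet> a - s * h $ i"
    by (simp add: inner_diff_right inner_axis)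
  have s2': "s * (s * t) = t" for t using s2 by (metis mult.assoc mult_1)
  show ?thesis
    unfolding fq_expand e1 e2 line_param_def
    using c by (simp add: field_simps power2_eq_square s2')
qed

lemma abs_int_ne_half:
  assumes "k \<in> \<int>" shows "\<bar>k\<bar> \<noteq> (1/2 :: real)"
proof -
  obtain z where k: "k = of_int z" using assms by (elim Ints_cases)
  have "\<bar>z\<bar> = 0 \<or> \<bar>z\<bar> \<ge> 1" by arith
  then have "\<bar>k\<bar> = 0 \<or> \<bar>k\<bar> \<ge> 1" unfolding k
    by (metis of_int_0 of_int_abs of_int_1_le_iff)
  then show ?thesis by auto
qed

lemma coordinate_bound:
  fixes P :: real and h a :: "real^'n"
  assumes P: "P \<ge> 0" and int: "a $ i \<in> \<int>"
    and local_min: "\<And>s. s * s = 1 \<Longrightarrow> fq P h a \<le> fq P h (a - s *\<^sub>R axis i 1)"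
  shows "\<bar>a $ i - h $ i * line_param P h a\<bar> < 1/2"
proof (rule ccontr)
  define c where "c = 1 + P * (norm h)\<^sup>2"
  define d where "d = a $ i - h $ i * line_param P h a"
  assume "\<not> \<bar>a $ i - h $ i * line_param P h a\<bar> < 1/2"
  then have far: "\<bar>d\<bar> \<ge> 1/2" by (simp add: d_def)
  have c: "c > 0" using P by (simp add: c_def add_pos_nonneg)
  define s :: real where "s = (if d \<ge> 0 then 1 else -1)"
  have s2: "s * s = 1" and sd: "s * d = \<bar>d\<bar>" by (simp_all add: s_def)
  have "0 \<le> fq P h (a - s *\<^sub>R axis i 1) - fq P h a" using local_min[OF s2] by simp
  also have "\<dots> = c * (1 - 2 * \<bar>d\<bar>) - P * (h $ i)\<^sup>2"
    using fq_coordinate_step[OF s2 P, of h a i] sd by (simp add: c_def d_def mult.assoc)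
  finally have change: "0 \<le> c * (1 - 2 * \<bar>d\<bar>) - P * (h $ i)\<^sup>2" .
  have "c * (1 - 2 * \<bar>d\<bar>) \<le> 0" using c far by (simp add: mult_nonneg_nonpos)
  moreover have "P * (h $ i)\<^sup>2 \<ge> 0" using P by simp
  ultimately have "c * (1 - 2 * \<bar>d\<bar>) = 0" and Ph: "P * (h $ i)\<^sup>2 = 0"
    using change by linarith+
  then have "\<bar>d\<bar> = 1/2" using c by simp
  moreover have "h $ i * line_param P h a = 0" using Ph by (auto simp: line_param_def)
  ultimately have "\<bar>a $ i\<bar> = 1/2" by (simp add: d_def)
  then show False using abs_int_ne_half[OF int] by simp
qed

lemma round_vec_unique:
  assumes "int_vec a" and "\<And>i. \<bar>a $ i - v $ i\<bar> < 1/2"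
  shows "a = round_vec v"
proof -
  have "real_of_int (round (v $ i)) = a $ i" for i
  proof -
    obtain k where k: "a $ i = of_int k"
      using assms(1) unfolding int_vec_def by (meson Ints_cases)
    have "round (v $ i) = k"
      by (rule round_unique) (use assms(2)[of i] k in \<open>simp_all only: abs_less_iff; linarith\<close>)+
    then show ?thesis using k by simp
  qed
  then show ?thesis by (simp add: round_vec_def vec_eq_iff)
qed

theorem theorem1:
  fixes P :: real and h astar :: "real^'n"
  assumes "P \<ge> 0"
    and "int_vec astar" and "astar \<noteq> 0"
    and "\<forall>a. int_vec a \<and> a \<noteq> 0 \<longrightarrow> fq P h astar \<le> fq P h a"
  shows "(\<exists>i. astar = axis i 1 \<or> astar = - axis i 1) \<or>
         (\<exists>x::real. (\<forall>i. astar $ i - 1/2 < h $ i * x \<and> h $ i * x < astar $ i + 1/2)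
                    \<and> astar = round_vec (x *\<^sub>R h))"
proof (cases "\<exists>i. astar = axis i 1 \<or> astar = - axis i 1")
  case True then show ?thesis by blast
next
  case not_unit: False
  define x where "x = line_param P h astar"
  have neighbour_min: "fq P h astar \<le> fq P h (astar - s *\<^sub>R axis i 1)"
    if "s * s = 1" for s i
  proof -
    have "s = 1 \<or> s = -1" using that by algebra
    then have "int_vec (astar - s *\<^sub>R axis i 1)" and "astar - s *\<^sub>R axis i 1 \<noteq> 0"
      using assms(2) not_unit by (auto simp: int_vec_def axis_def)
    then show ?thesis using assms(4) by blast
  qed
  have close: "\<bar>astar $ i - h $ i * x\<bar> < 1/2" for i
    unfolding x_def using assms(2) neighbour_min
    by (intro coordinate_bound[OF assms(1)]) (auto simp: int_vec_def)
  have "\<forall>i. astar $ i - 1/2 < h $ i * x \<and> h $ i * x < astar $ i + 1/2"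
  proof
    fix i show "astar $ i - 1/2 < h $ i * x \<and> h $ i * x < astar $ i + 1/2"
      using close[of i] by (simp only: abs_less_iff) linarith
  qed
  moreover have "astar = round_vec (x *\<^sub>R h)"
    using close by (intro round_vec_unique[OF assms(2)]) (simp add: mult.commute)
  ultimately show ?thesis by blast
qed

end
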